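(* Let $\sigma : \mathcal{S} \to \mathcal{A}$ be a strong-receptive courteous pre-$\sim$-strategy on a thin concurrent game $\mathcal{A}$; then $\mathcal{S}$ is race-preserving as well.
   Context: $e \rightarrow e'$ denotes immediate causal dependency ($e<e'$ with nothing strictly between). An essp is an event structure with polarities $A$ with a symmetry $(\tilde A,l_A,r_A)$, equivalently an isomorphism family $\mathbb{S}_A$ of bijections between configurations. An essp $\mathcal{A}$ is race-preserving if $l_A$ preserves races: whenever a configuration of $\tilde A$ (an isomorphism $\theta\in\mathbb{S}_A$) extends by a negative event and by a positive event to configurations of $\tilde A$ whose union is not a configuration of $\tilde A$, then the images under $l_A$ are likewise incompatible in $A$. A thin concurrent game (tcg) is an essp which is race-preserving and has receptive thin sub-symmetries of $\mathcal{A}^\perp$ and $\mathcal{A}$. A pre-$\sim$-strategy is a map of essps; it is courteous if $s_1 \rightarrow s_2$ with $\mathrm{pol}(s_1)=+$ or $\mathrm{pol}(s_2)=-$ implies $\sigma s_1 \rightarrow \sigma s_2$, and strong-receptive if whenever $\theta\in\mathbb{S}_S$ and $\sigma\theta$ extends in $\mathbb{S}_A$ by a pair $(a_1,a_2)$ of negative events, there is a unique extension $\theta\cup\{(s_1,s_2)\}\in\mathbb{S}_S$ with $\sigma s_i=a_i$. *)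

theory Defs
  imports Main
begin

datatype polarity = Pos | Neg

fun dual_pol :: "polarity \<Rightarrow> polarity" where
  "dual_pol Pos = Neg" | "dual_pol Neg = Pos"

text \<open>An essp: events, causal order, binary conflict, polarity, and the
  isomorphism family (symmetry) given as a set of bijections between
  configurations, each represented by its graph.\<close>
record 'a essp =
  ev  :: "'a set"
  le  :: "'a \<Rightarrow> 'a \<Rightarrow> bool"
  cf  :: "'a \<Rightarrow> 'a \<Rightarrow> bool"
  pol :: "'a \<Rightarrow> polarity"
  sym :: "('a \<times> 'a) set set"

definition es :: "'a essp \<Rightarrow> bool" where
  "es G \<longleftrightarrow>
     (\<forall>e e'. le G e e' \<longrightarrow> e \<in> ev G \<and> e' \<in> ev G)
   \<and> (\<forall>e\<in>ev G. le G e e)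
   \<and> (\<forall>e e'. le G e e' \<and> le G e' e \<longrightarrow> e = e')
   \<and> (\<forall>e e' e''. le G e e' \<and> le G e' e'' \<longrightarrow> le G e e'')
   \<and> (\<forall>e\<in>ev G. finite {e'. le G e' e})
   \<and> (\<forall>e e'. cf G e e' \<longrightarrow> e \<in> ev G \<and> e' \<in> ev G)
   \<and> (\<forall>e e'. cf G e e' \<longrightarrow> cf G e' e)
   \<and> (\<forall>e. \<not> cf G e e)
   \<and> (\<forall>e e' e''. cf G e e' \<and> le G e' e'' \<longrightarrow> cf G e e'')"

definition config :: "'a essp \<Rightarrow> 'a set \<Rightarrow> bool" where
  "config G x \<longleftrightarrow> x \<subseteq> ev G \<and> finite x
     \<and> (\<forall>e\<in>x. \<forall>e'. le G e' e \<longrightarrow> e' \<in> x)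
     \<and> (\<forall>e\<in>x. \<forall>e'\<in>x. \<not> cf G e e')"

definition iso_fam :: "'a essp \<Rightarrow> ('a \<times> 'a) set set \<Rightarrow> bool" where
  "iso_fam G S \<longleftrightarrow>
     (\<forall>\<theta>\<in>S. single_valued \<theta> \<and> single_valued (\<theta>\<inverse>)
              \<and> config G (Domain \<theta>) \<and> config G (Range \<theta>))
   \<and> (\<forall>x. config G x \<longrightarrow> Id_on x \<in> S)
   \<and> (\<forall>\<theta>\<in>S. \<theta>\<inverse> \<in> S)
   \<and> (\<forall>\<theta>\<in>S. \<forall>\<phi>\<in>S. Range \<theta> = Domain \<phi> \<longrightarrow> \<theta> O \<phi> \<in> S)
   \<and> (\<forall>\<theta>\<in>S. \<forall>x'. config G x' \<and> x' \<subseteq> Domain \<theta> \<longrightarrow> {p\<in>\<theta>. fst p \<in> x'} \<in> S)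
   \<and> (\<forall>\<theta>\<in>S. \<forall>x'. config G x' \<and> Domain \<theta> \<subseteq> x' \<longrightarrow>
          (\<exists>\<theta>'\<in>S. \<theta> \<subseteq> \<theta>' \<and> Domain \<theta>' = x'))"

definition is_essp :: "'a essp \<Rightarrow> bool" where
  "is_essp G \<longleftrightarrow> es G \<and> iso_fam G (sym G)
     \<and> (\<forall>\<theta>\<in>sym G. \<forall>(a, b)\<in>\<theta>. pol G a = pol G b)"

text \<open>Race-preservation: configurations of the event structure of isomorphisms
  are exactly the elements of the symmetry; l projects an isomorphism to its domain.\<close>
definition race_preserving :: "'a essp \<Rightarrow> bool" where
  "race_preserving G \<longleftrightarrow>
     (\<forall>\<theta> a1 a2 b1 b2.
        \<theta> \<in> sym G
        \<and> (a1, a2) \<notin> \<theta> \<and> insert (a1, a2) \<theta> \<in> sym G \<and> pol G a1 = Neg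
        \<and> (b1, b2) \<notin> \<theta> \<and> insert (b1, b2) \<theta> \<in> sym G \<and> pol G b1 = Pos
        \<and> insert (a1, a2) (insert (b1, b2) \<theta>) \<notin> sym G
        \<longrightarrow> \<not> config G (insert a1 (insert b1 (Domain \<theta>))))"

definition imm :: "'a essp \<Rightarrow> 'a \<Rightarrow> 'a \<Rightarrow> bool" where
  "imm G e e' \<longleftrightarrow> le G e e' \<and> e \<noteq> e'
     \<and> \<not> (\<exists>e''. le G e e'' \<and> le G e'' e' \<and> e'' \<noteq> e \<and> e'' \<noteq> e')"

definition essp_map :: "'a essp \<Rightarrow> 'b essp \<Rightarrow> ('a \<Rightarrow> 'b) \<Rightarrow> bool" where
  "essp_map S A f \<longleftrightarrow>
     (\<forall>s\<in>ev S. f s \<in> ev A)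
   \<and> (\<forall>x. config S x \<longrightarrow> config A (f ` x) \<and> inj_on f x)
   \<and> (\<forall>s\<in>ev S. pol A (f s) = pol S s)
   \<and> (\<forall>\<theta>\<in>sym S. map_prod f f ` \<theta> \<in> sym A)"

definition pre_strategy :: "'a essp \<Rightarrow> 'b essp \<Rightarrow> ('a \<Rightarrow> 'b) \<Rightarrow> bool" where
  "pre_strategy S A \<sigma> \<longleftrightarrow> is_essp S \<and> is_essp A \<and> essp_map S A \<sigma>"

definition courteous :: "'a essp \<Rightarrow> 'b essp \<Rightarrow> ('a \<Rightarrow> 'b) \<Rightarrow> bool" where
  "courteous S A \<sigma> \<longleftrightarrow>
     (\<forall>s1 s2. imm S s1 s2 \<and> (pol S s1 = Pos \<or> pol S s2 = Neg) \<longrightarrow> imm A (\<sigma> s1) (\<sigma> s2))"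

definition strong_receptive :: "'a essp \<Rightarrow> 'b essp \<Rightarrow> ('a \<Rightarrow> 'b) \<Rightarrow> bool" where
  "strong_receptive S A \<sigma> \<longleftrightarrow>
     (\<forall>\<theta> a1 a2. \<theta> \<in> sym S
        \<and> (a1, a2) \<notin> map_prod \<sigma> \<sigma> ` \<theta>
        \<and> insert (a1, a2) (map_prod \<sigma> \<sigma> ` \<theta>) \<in> sym A
        \<and> pol A a1 = Neg \<and> pol A a2 = Neg
        \<longrightarrow> (\<exists>!p. insert p \<theta> \<in> sym S \<and> \<sigma> (fst p) = a1 \<and> \<sigma> (snd p) = a2))"

text \<open>Thin and receptive isomorphism families, relative to a polarity function
  (pol G for A, dual_pol \<circ> pol G for A^\<bottom>).\<close>
definition thin :: "'a essp \<Rightarrow> ('a \<Rightarrow> polarity) \<Rightarrow> ('a \<times> 'a) set set \<Rightarrow> bool" where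
  "thin G pl S \<longleftrightarrow>
     (\<forall>x a1 a2. config G x \<and> (a1, a2) \<notin> Id_on x \<and> insert (a1, a2) (Id_on x) \<in> S
        \<and> pl a1 = Pos \<longrightarrow> a1 = a2)"

definition receptive :: "'a essp \<Rightarrow> ('a \<Rightarrow> polarity) \<Rightarrow> ('a \<times> 'a) set set \<Rightarrow> bool" where
  "receptive G pl S \<longleftrightarrow>
     (\<forall>\<theta>\<in>S. \<forall>a1. a1 \<notin> Domain \<theta> \<and> config G (insert a1 (Domain \<theta>)) \<and> pl a1 = Neg
        \<longrightarrow> (\<exists>!a2. insert (a1, a2) \<theta> \<in> S))"

definition tcg :: "'a essp \<Rightarrow> bool" where
  "tcg A \<longleftrightarrow> is_essp A \<and> race_preserving A
     \<and> (\<exists>Sm Sp. iso_fam A Sm \<and> Sm \<subseteq> sym A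
           \<and> thin A (dual_pol \<circ> pol A) Sm \<and> receptive A (dual_pol \<circ> pol A) Sm
           \<and> iso_fam A Sp \<and> Sp \<subseteq> sym A
           \<and> thin A (pol A) Sp \<and> receptive A (pol A) Sp)"

end

theory Submission
  imports Defs
begin

text \<open>Let \<open>\<theta>\<close> extend by a negative \<open>(a\<^sub>1, a\<^sub>2)\<close> and a positive \<open>(b\<^sub>1, b\<^sub>2)\<close>
  with \<open>{a\<^sub>1, b\<^sub>1} \<union> dom \<theta>\<close> a configuration of \<open>S\<close>. Since \<open>\<A>\<close> preserves races, the
  images of the two extensions are compatible in \<open>\<A>\<close>. Strong receptivity applied to
  \<open>\<theta> \<union> {(b\<^sub>1, b\<^sub>2)}\<close> then adds a pair \<open>(u, v)\<close> over \<open>(\<sigma> a\<^sub>1, \<sigma> a\<^sub>2)\<close>. The event \<open>u\<close> cannot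
  depend on \<open>b\<^sub>1\<close>: that dependency would be immediate, so by courtesy \<open>\<sigma> b\<^sub>1 \<rightarrow> \<sigma> a\<^sub>1\<close>,
  contradicting that \<open>\<sigma>\<close> maps the configuration \<open>{a\<^sub>1} \<union> dom \<theta>\<close> to a configuration.
  Hence \<open>(u, v)\<close> already extends \<open>\<theta>\<close>, and uniqueness in strong receptivity forces
  \<open>(u, v) = (a\<^sub>1, a\<^sub>2)\<close>, so the two extensions of \<open>\<theta>\<close> are compatible in \<open>S\<close>.\<close>

lemma config_down_closed: "config G x \<Longrightarrow> e \<in> x \<Longrightarrow> le G e' e \<Longrightarrow> e' \<in> x"
  unfolding config_def by blast

lemma config_subset_ev: "config G x \<Longrightarrow> e \<in> x \<Longrightarrow> e \<in> ev G"
  unfolding config_def by blast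

lemma config_insert_imm:
  assumes "config G x" "config G (insert u (insert b x))" "b \<notin> x" "le G b u" "b \<noteq> u"
  shows "imm G b u"
  unfolding imm_def
proof (intro conjI notI)
  assume "\<exists>e. le G b e \<and> le G e u \<and> e \<noteq> b \<and> e \<noteq> u"
  then obtain e where e: "le G b e" "le G e u" "e \<noteq> b" "e \<noteq> u" by blast
  then have "e \<in> x" using config_down_closed[OF assms(2) insertI1] by blast
  then show False using config_down_closed[OF assms(1) _ e(1)] assms(3) by blast
qed (use assms in auto)

lemma config_insert_drop:
  assumes "config G (insert u (insert b x))" "config G x" "\<not> le G b u"
  shows "config G (insert u x)"
  using assms unfolding config_def by (metis insert_iff insert_subset finite_insert)

lemma is_essp_symD:
  assumes "is_essp G" "\<theta> \<in> sym G"
  shows sym_single_valued: "single_valued \<theta>"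
    and sym_config_Domain: "config G (Domain \<theta>)"
    and sym_config_Range: "config G (Range \<theta>)"
    and sym_pol_eq: "(a, b) \<in> \<theta> \<Longrightarrow> pol G a = pol G b"
    and sym_restrict: "config G x \<Longrightarrow> x \<subseteq> Domain \<theta> \<Longrightarrow> {p\<in>\<theta>. fst p \<in> x} \<in> sym G"
  using assms unfolding is_essp_def iso_fam_def by auto

lemma sym_insert_fresh_Domain:
  assumes "is_essp G" "insert (a, b) \<theta> \<in> sym G" "(a, b) \<notin> \<theta>"
  shows "a \<notin> Domain \<theta>"
  using sym_single_valued[OF assms(1,2)] assms(3) unfolding single_valued_def by blast

lemma race_preservingD:
  assumes "race_preserving G" "\<theta> \<in> sym G"
    and "insert (a1, a2) \<theta> \<in> sym G" "(a1, a2) \<notin> \<theta>" "pol G a1 = Neg"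
    and "insert (b1, b2) \<theta> \<in> sym G" "(b1, b2) \<notin> \<theta>" "pol G b1 = Pos"
    and "config G (insert a1 (insert b1 (Domain \<theta>)))"
  shows "insert (a1, a2) (insert (b1, b2) \<theta>) \<in> sym G"
  using assms unfolding race_preserving_def by blast

lemma essp_mapD:
  assumes "essp_map S A \<sigma>"
  shows essp_map_config: "config S x \<Longrightarrow> config A (\<sigma> ` x)"
    and essp_map_inj_on: "config S x \<Longrightarrow> inj_on \<sigma> x"
    and essp_map_pol: "s \<in> ev S \<Longrightarrow> pol A (\<sigma> s) = pol S s"
    and essp_map_sym: "\<theta> \<in> sym S \<Longrightarrow> map_prod \<sigma> \<sigma> ` \<theta> \<in> sym A"
  using assms unfolding essp_map_def by auto

lemma Domain_map_prod_image: "Domain (map_prod f f ` \<theta>) = f ` Domain \<theta>"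
  by force

lemma essp_map_pol_sym_insert:
  assumes "essp_map S A \<sigma>" "is_essp S" "insert (a, b) \<theta> \<in> sym S"
  shows "pol A (\<sigma> a) = pol S a" "pol A (\<sigma> b) = pol S a"
proof -
  have "a \<in> ev S" "b \<in> ev S"
    using sym_config_Domain[OF assms(2,3)] sym_config_Range[OF assms(2,3)]
    by (auto intro: config_subset_ev)
  then show "pol A (\<sigma> a) = pol S a" "pol A (\<sigma> b) = pol S a"
    using sym_pol_eq[OF assms(2,3), of a b] by (simp_all add: essp_map_pol[OF assms(1)])
qed

lemma essp_map_sym_insert_fresh:
  assumes "essp_map S A \<sigma>" "is_essp S" "insert (a, b) \<theta> \<in> sym S" "(a, b) \<notin> \<theta>"
  shows "(\<sigma> a, \<sigma> b) \<notin> map_prod \<sigma> \<sigma> ` \<theta>"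
proof
  assume "(\<sigma> a, \<sigma> b) \<in> map_prod \<sigma> \<sigma> ` \<theta>"
  then obtain c d where cd: "(c, d) \<in> \<theta>" "\<sigma> c = \<sigma> a" "\<sigma> d = \<sigma> b" by auto
  have "c = a"
    using essp_map_inj_on[OF assms(1) sym_config_Domain[OF assms(2,3)]] cd
    by (auto simp: inj_on_def Domain.intros)
  moreover have "d = b"
    using essp_map_inj_on[OF assms(1) sym_config_Range[OF assms(2,3)]] cd
    by (auto simp: inj_on_def Range.intros)
  ultimately show False using cd assms(4) by simp
qed

lemma courteous_not_le_positive:
  assumes "courteous S A \<sigma>" "essp_map S A \<sigma>"
    and "config S x" "config S (insert a x)"
    and "config S (insert a (insert b x))" "config S (insert u (insert b x))"
    and "b \<notin> x" "pol S a = Neg" "pol S b = Pos" "\<sigma> u = \<sigma> a"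
  shows "\<not> le S b u"
proof
  assume le: "le S b u"
  have "a \<in> ev S" "b \<in> ev S" using config_subset_ev[OF assms(5)] by auto
  then have "pol A (\<sigma> a) = Neg" "pol A (\<sigma> b) = Pos"
    using assms(8,9) by (simp_all add: essp_map_pol[OF assms(2)])
  then have ba: "\<sigma> b \<noteq> \<sigma> a" by auto
  then have "b \<noteq> u" using assms(10) by auto
  then have "imm S b u" using config_insert_imm[OF assms(3,6,7) le] by simp
  then have "le A (\<sigma> b) (\<sigma> a)" using assms(1,9,10) unfolding courteous_def imm_def by metis
  then have "\<sigma> b \<in> \<sigma> ` insert a x"
    using config_down_closed[OF essp_map_config[OF assms(2,4)]] by blast
  then obtain c where "c \<in> x" "\<sigma> c = \<sigma> b" using ba by auto
  then have "b \<in> x" using essp_map_inj_on[OF assms(2,5)] unfolding inj_on_def by blast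
  then show False using assms(7) by simp
qed

lemma strong_receptiveD:
  assumes "strong_receptive S A \<sigma>" "\<theta> \<in> sym S"
    and "(a1, a2) \<notin> map_prod \<sigma> \<sigma> ` \<theta>" "insert (a1, a2) (map_prod \<sigma> \<sigma> ` \<theta>) \<in> sym A"
    and "pol A a1 = Neg" "pol A a2 = Neg"
  shows "\<exists>!p. insert p \<theta> \<in> sym S \<and> \<sigma> (fst p) = a1 \<and> \<sigma> (snd p) = a2"
  using assms unfolding strong_receptive_def by blast

lemma strong_receptive_unique:
  assumes "strong_receptive S A \<sigma>" "essp_map S A \<sigma>" "is_essp S"
    and "\<theta> \<in> sym S" "insert (a1, a2) \<theta> \<in> sym S" "(a1, a2) \<notin> \<theta>" "pol S a1 = Neg"
    and "insert q \<theta> \<in> sym S" "\<sigma> (fst q) = \<sigma> a1" "\<sigma> (snd q) = \<sigma> a2"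
  shows "q = (a1, a2)"
proof -
  have "\<exists>!p. insert p \<theta> \<in> sym S \<and> \<sigma> (fst p) = \<sigma> a1 \<and> \<sigma> (snd p) = \<sigma> a2"
    using essp_map_sym[OF assms(2,5)] essp_map_sym_insert_fresh[OF assms(2,3,5,6)]
      essp_map_pol_sym_insert[OF assms(2,3,5)] assms(7)
    by (intro strong_receptiveD[OF assms(1,4)]) simp_all
  then show ?thesis using assms(5,8-10) by (metis fst_conv snd_conv)
qed

lemma strategy_lifts_compatible_race:
  assumes "pre_strategy S A \<sigma>" "courteous S A \<sigma>" "strong_receptive S A \<sigma>"
    and "\<theta> \<in> sym S"
    and a: "insert (a1, a2) \<theta> \<in> sym S" "(a1, a2) \<notin> \<theta>" "pol S a1 = Neg"
    and b: "insert (b1, b2) \<theta> \<in> sym S" "(b1, b2) \<notin> \<theta>" "pol S b1 = Pos"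
    and X: "config S (insert a1 (insert b1 (Domain \<theta>)))"
    and image: "insert (\<sigma> a1, \<sigma> a2) (insert (\<sigma> b1, \<sigma> b2) (map_prod \<sigma> \<sigma> ` \<theta>)) \<in> sym A"
  shows "insert (a1, a2) (insert (b1, b2) \<theta>) \<in> sym S"
proof -
  have S: "is_essp S" and \<sigma>: "essp_map S A \<sigma>"
    using assms(1) unfolding pre_strategy_def by auto
  define \<theta>' where "\<theta>' = insert (b1, b2) \<theta>"
  have b1: "b1 \<notin> Domain \<theta>" using sym_insert_fresh_Domain[OF S b(1,2)] .
  have a1: "pol A (\<sigma> a1) = Neg" and a2: "pol A (\<sigma> a2) = Neg" and "pol A (\<sigma> b1) = Pos"
    using essp_map_pol_sym_insert[OF \<sigma> S a(1)] essp_map_pol_sym_insert[OF \<sigma> S b(1)] a(3) b(3)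
    by simp_all
  then have fresh: "(\<sigma> a1, \<sigma> a2) \<notin> map_prod \<sigma> \<sigma> ` \<theta>'"
    using essp_map_sym_insert_fresh[OF \<sigma> S a(1,2)] unfolding \<theta>'_def by auto
  have ext: "insert (\<sigma> a1, \<sigma> a2) (map_prod \<sigma> \<sigma> ` \<theta>') \<in> sym A"
    using image unfolding \<theta>'_def by simp
  have \<theta>': "\<theta>' \<in> sym S" using b(1) unfolding \<theta>'_def .
  obtain u v where uv: "insert (u, v) \<theta>' \<in> sym S" "\<sigma> u = \<sigma> a1" "\<sigma> v = \<sigma> a2"
    using strong_receptiveD[OF assms(3) \<theta>' fresh ext a1 a2] by auto
  have "(u, v) \<notin> \<theta>'"
    using fresh uv(2,3) by (metis map_prod_imageI)
  then have u: "u \<notin> insert b1 (Domain \<theta>)"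
    using sym_insert_fresh_Domain[OF S uv(1)] unfolding \<theta>'_def by simp
  have ub: "config S (insert u (insert b1 (Domain \<theta>)))"
    using sym_config_Domain[OF S uv(1)] unfolding \<theta>'_def by simp
  have "config S (insert a1 (Domain \<theta>))"
    using sym_config_Domain[OF S a(1)] by simp
  then have "\<not> le S b1 u"
    using courteous_not_le_positive[OF assms(2) \<sigma> sym_config_Domain[OF S assms(4)] _ X ub b1]
      a(3) b(3) uv(2) by blast
  then have "config S (insert u (Domain \<theta>))"
    using config_insert_drop[OF ub sym_config_Domain[OF S assms(4)]] by simp
  then have "{p \<in> insert (u, v) \<theta>'. fst p \<in> insert u (Domain \<theta>)} \<in> sym S"
    by (rule sym_restrict[OF S uv(1)]) (auto simp: \<theta>'_def)
  also have "{p \<in> insert (u, v) \<theta>'. fst p \<in> insert u (Domain \<theta>)} = insert (u, v) \<theta>"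
    using u b1 unfolding \<theta>'_def by auto
  finally have "(u, v) = (a1, a2)"
    using strong_receptive_unique[OF assms(3) \<sigma> S assms(4) a] uv(2,3) by simp
  then show ?thesis using uv(1) unfolding \<theta>'_def by simp
qed

theorem mainTheorem9:
  fixes S :: "'a essp" and A :: "'b essp" and \<sigma> :: "'a \<Rightarrow> 'b"
  assumes "tcg A"
    and "pre_strategy S A \<sigma>"
    and "courteous S A \<sigma>"
    and "strong_receptive S A \<sigma>"
  shows "race_preserving S"
  unfolding race_preserving_def
proof (intro allI impI notI, elim conjE)
  fix \<theta> a1 a2 b1 b2
  assume \<theta>: "\<theta> \<in> sym S"
    and a: "(a1, a2) \<notin> \<theta>" "insert (a1, a2) \<theta> \<in> sym S" "pol S a1 = Neg"
    and b: "(b1, b2) \<notin> \<theta>" "insert (b1, b2) \<theta> \<in> sym S" "pol S b1 = Pos"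
    and race: "insert (a1, a2) (insert (b1, b2) \<theta>) \<notin> sym S"
    and X: "config S (insert a1 (insert b1 (Domain \<theta>)))"
  have S: "is_essp S" and \<sigma>: "essp_map S A \<sigma>"
    using assms(2) unfolding pre_strategy_def by auto
  let ?m = "map_prod \<sigma> \<sigma>"
  have "race_preserving A" using assms(1) unfolding tcg_def by simp
  moreover have "config A (insert (\<sigma> a1) (insert (\<sigma> b1) (Domain (?m ` \<theta>))))"
    using essp_map_config[OF \<sigma> X] by (simp add: Domain_map_prod_image)
  ultimately have "insert (\<sigma> a1, \<sigma> a2) (insert (\<sigma> b1, \<sigma> b2) (?m ` \<theta>)) \<in> sym A"
    using essp_map_sym[OF \<sigma> \<theta>] essp_map_sym[OF \<sigma> a(2)] essp_map_sym[OF \<sigma> b(2)]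
      essp_map_sym_insert_fresh[OF \<sigma> S] a b
      essp_map_pol_sym_insert[OF \<sigma> S a(2)] essp_map_pol_sym_insert[OF \<sigma> S b(2)]
    by (intro race_preservingD) simp_all
  then show False
    using strategy_lifts_compatible_race[OF assms(2-4) \<theta> a(2,1,3) b(2,1,3) X] race by simp
qed

end
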